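(* Let $\mathcal G=(G,f,h)$ be a network dynamical system of size $N$ with maximum out-degree $\Delta(G)$, satisfying Assumptions 1 and 2. Let $P$ be an integer with $2\Delta(G)+1<P<N$, and for each $q\in[N]$ let $\phi_q\in\mathbb R^{P\times N}$ be a full-spark matrix. For each $q\in[N]$ let $x^q(1)$ be the state at time $1$ of the trajectory started from a $q$-pinching initial condition, and let $y^q(1)=\phi_q x^q(1)$. Then for every $q\in[N]$ the optimization problem $$\min_{\tilde x\in\mathbb R^N}\|\tilde x\|_0\quad\text{subject to}\quad \phi_q\tilde x=y^q(1)$$ has a unique solution $x^q_*(1)$, and $x^q_*(1)=x^q(1)$. Moreover, $\operatorname{supp}(x^q(1))\setminus\{q\}=L_1(q)$ for every $q\in[N]$; consequently the adjacency matrix $A$ is uniquely determined by $\{(\phi_q,y^q(1))\}_{q=1}^N$ via $A_{ij}=1$ iff $i\neq j$ and $i\in\operatorname{supp}(x^j_*(1))$.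
   Context: Let $G$ be a directed graph on vertex set $[N]=\{1,\dots,N\}$ without self-loops, with adjacency matrix $A\in\{0,1\}^{N\times N}$, where $A_{ij}=1$ if and only if $i$ receives an edge (input) from $j$; in particular $A_{ii}=0$. The out-degree of $q\in[N]$ is $d_q=\#\{i: A_{iq}=1\}$, the maximum out-degree is $\Delta(G)=\max_{q}d_q$, and the first-level set of $q$ is $L_1(q)=\{i\in[N]: A_{iq}=1\}$. The network dynamical system $\mathcal G=(G,f,h)$ is the discrete-time system $x_i(t+1)=f_i(x_i(t))+\sum_{j=1}^N A_{ij}h_{ij}(x_i(t),x_j(t))$ for $i\in[N]$, $t=0,1,2,\dots$, where $f_i:\mathbb R\to\mathbb R$ and $h_{ij}:\mathbb R\times\mathbb R\to\mathbb R$; the state vector is $x(t)=(x_1(t),\dots,x_N(t))^T$. Assumption 1: $f_i(0)=0$ for all $i\in[N]$. Assumption 2: there is $\delta>0$ such that for all $i,j\in[N]$, $h_{ij}(0,0)=0$ and $h_{ij}(0,v)\neq 0$ for every $v$ with $0<|v|<\delta$. For $q\in[N]$, a $q$-pinching initial condition is $x^q(0)$ with $x^q_i(0)=\epsilon_q\delta_{iq}$ (Kronecker delta), where $0<|\epsilon_q|<\delta$; $x^q(t)$ denotes the resulting trajectory. For $x\in\mathbb R^N$, $\operatorname{supp}(x)=\{i: x_i\neq0\}$ and $\|x\|_0=\#\operatorname{supp}(x)$. The spark of $\phi\in\mathbb R^{P\times N}$ ($P<N$) is $\min\{\|x\|_0: \phi x=0,\ x\neq 0\}$; $\phi$ is full-spark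 if its spark equals $P+1$. *)

theory Defs
  imports "HOL-Analysis.Analysis"
begin

text \<open>Vectors in R^N are functions nat => real vanishing outside {1..N};
  a P x N matrix is a function nat => nat => real, of which only rows 1..P
  and columns 1..N are used.\<close>

definition vecs :: "nat \<Rightarrow> (nat \<Rightarrow> real) set" where
  "vecs N = {x. \<forall>i. i \<notin> {1..N} \<longrightarrow> x i = 0}"

definition mat_vec :: "nat \<Rightarrow> nat \<Rightarrow> (nat \<Rightarrow> nat \<Rightarrow> real) \<Rightarrow> (nat \<Rightarrow> real) \<Rightarrow> (nat \<Rightarrow> real)" where
  "mat_vec P N \<phi> x = (\<lambda>i. if i \<in> {1..P} then (\<Sum>j\<in>{1..N}. \<phi> i j * x j) else 0)"

definition supp :: "nat \<Rightarrow> (nat \<Rightarrow> real) \<Rightarrow> nat set" where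
  "supp N x = {i \<in> {1..N}. x i \<noteq> 0}"

definition norm0 :: "nat \<Rightarrow> (nat \<Rightarrow> real) \<Rightarrow> nat" where
  "norm0 N x = card (supp N x)"

definition spark :: "nat \<Rightarrow> nat \<Rightarrow> (nat \<Rightarrow> nat \<Rightarrow> real) \<Rightarrow> nat" where
  "spark P N \<phi> = (LEAST k. \<exists>x \<in> vecs N. mat_vec P N \<phi> x = (\<lambda>_. 0) \<and> x \<noteq> (\<lambda>_. 0) \<and> norm0 N x = k)"

definition full_spark :: "nat \<Rightarrow> nat \<Rightarrow> (nat \<Rightarrow> nat \<Rightarrow> real) \<Rightarrow> bool" where
  "full_spark P N \<phi> \<longleftrightarrow> spark P N \<phi> = P + 1"

definition adjacency :: "nat \<Rightarrow> (nat \<Rightarrow> nat \<Rightarrow> real) \<Rightarrow> bool" where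
  "adjacency N A \<longleftrightarrow> (\<forall>i j. A i j \<in> {0,1}) \<and> (\<forall>i. A i i = 0)
     \<and> (\<forall>i j. i \<notin> {1..N} \<or> j \<notin> {1..N} \<longrightarrow> A i j = 0)"

definition out_degree :: "nat \<Rightarrow> (nat \<Rightarrow> nat \<Rightarrow> real) \<Rightarrow> nat \<Rightarrow> nat" where
  "out_degree N A q = card {i \<in> {1..N}. A i q = 1}"

definition max_out_degree :: "nat \<Rightarrow> (nat \<Rightarrow> nat \<Rightarrow> real) \<Rightarrow> nat" where
  "max_out_degree N A = Max ((out_degree N A) ` {1..N})"

definition L1 :: "nat \<Rightarrow> (nat \<Rightarrow> nat \<Rightarrow> real) \<Rightarrow> nat \<Rightarrow> nat set" where
  "L1 N A q = {i \<in> {1..N}. A i q = 1}"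

definition net_step :: "nat \<Rightarrow> (nat \<Rightarrow> nat \<Rightarrow> real) \<Rightarrow> (nat \<Rightarrow> real \<Rightarrow> real)
    \<Rightarrow> (nat \<Rightarrow> nat \<Rightarrow> real \<Rightarrow> real \<Rightarrow> real) \<Rightarrow> (nat \<Rightarrow> real) \<Rightarrow> (nat \<Rightarrow> real)" where
  "net_step N A f h x = (\<lambda>i. if i \<in> {1..N}
      then f i (x i) + (\<Sum>j\<in>{1..N}. A i j * h i j (x i) (x j)) else 0)"

definition trajectory :: "nat \<Rightarrow> (nat \<Rightarrow> nat \<Rightarrow> real) \<Rightarrow> (nat \<Rightarrow> real \<Rightarrow> real)
    \<Rightarrow> (nat \<Rightarrow> nat \<Rightarrow> real \<Rightarrow> real \<Rightarrow> real) \<Rightarrow> (nat \<Rightarrow> real) \<Rightarrow> nat \<Rightarrow> (nat \<Rightarrow> real)" where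
  "trajectory N A f h x0 t = (net_step N A f h ^^ t) x0"

definition pinch :: "nat \<Rightarrow> real \<Rightarrow> (nat \<Rightarrow> real)" where
  "pinch q eps = (\<lambda>i. if i = q then eps else 0)"

definition assumption1 :: "nat \<Rightarrow> (nat \<Rightarrow> real \<Rightarrow> real) \<Rightarrow> bool" where
  "assumption1 N f \<longleftrightarrow> (\<forall>i\<in>{1..N}. f i 0 = 0)"

definition assumption2 :: "nat \<Rightarrow> (nat \<Rightarrow> nat \<Rightarrow> real \<Rightarrow> real \<Rightarrow> real) \<Rightarrow> real \<Rightarrow> bool" where
  "assumption2 N h \<delta> \<longleftrightarrow> \<delta> > 0 \<and> (\<forall>i\<in>{1..N}. \<forall>j\<in>{1..N}.
      h i j 0 0 = 0 \<and> (\<forall>v. 0 < \<bar>v\<bar> \<and> \<bar>v\<bar> < \<delta> \<longrightarrow> h i j 0 v \<noteq> 0))"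

definition unique_l0_solution :: "nat \<Rightarrow> nat \<Rightarrow> (nat \<Rightarrow> nat \<Rightarrow> real) \<Rightarrow> (nat \<Rightarrow> real) \<Rightarrow> (nat \<Rightarrow> real) \<Rightarrow> bool" where
  "unique_l0_solution P N \<phi> y x \<longleftrightarrow> x \<in> vecs N \<and> mat_vec P N \<phi> x = y \<and>
     (\<forall>z \<in> vecs N. mat_vec P N \<phi> z = y \<longrightarrow> norm0 N x \<le> norm0 N z) \<and>
     (\<forall>z \<in> vecs N. mat_vec P N \<phi> z = y \<and> norm0 N z \<le> norm0 N x \<longrightarrow> z = x)"

end

theory Submission
  imports Defs
begin

text \<open>After one step from a q-pinching state, node i \<noteq> q holds A i q * h i q 0 eps, because
  f i 0 = 0 and h i j 0 0 = 0 kill every other term; by Assumption 2 this is nonzero exactly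
  when i receives an edge from q. So the state x^q(1) is supported in {q} \<union> L1(q) and has at
  most \<Delta>(G) + 1 \<le> P/2 nonzero entries. A full-spark matrix has no nonzero kernel vector with
  at most P entries, and the difference of two solutions with at most P/2 entries each would
  be one; hence x^q(1) is the unique sparsest solution of its own measurements.\<close>

lemma mat_vec_diff:
  "mat_vec P N \<phi> (\<lambda>i. x i - z i) = (\<lambda>i. mat_vec P N \<phi> x i - mat_vec P N \<phi> z i)"
  by (auto simp: mat_vec_def algebra_simps sum_subtractf)

lemma norm0_diff_le: "norm0 N (\<lambda>i. x i - z i) \<le> norm0 N x + norm0 N z"
proof -
  have "card (supp N (\<lambda>i. x i - z i)) \<le> card (supp N x \<union> supp N z)"
    by (intro card_mono) (auto simp: supp_def)
  also have "\<dots> \<le> card (supp N x) + card (supp N z)"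
    by (rule card_Un_le)
  finally show ?thesis
    by (simp add: norm0_def)
qed

lemma spark_le_norm0:
  assumes "w \<in> vecs N" and "mat_vec P N \<phi> w = (\<lambda>_. 0)" and "w \<noteq> (\<lambda>_. 0)"
  shows "spark P N \<phi> \<le> norm0 N w"
  unfolding spark_def by (rule Least_le) (use assms in blast)

lemma sparse_solution_unique:
  assumes x: "x \<in> vecs N" and z: "z \<in> vecs N"
    and same: "mat_vec P N \<phi> z = mat_vec P N \<phi> x"
    and sparser: "norm0 N z \<le> norm0 N x" and sparse: "2 * norm0 N x < spark P N \<phi>"
  shows "z = x"
proof (rule ccontr)
  assume "z \<noteq> x"
  define w where "w = (\<lambda>i. x i - z i)"
  have "w \<noteq> (\<lambda>_. 0)"
    using \<open>z \<noteq> x\<close> unfolding w_def fun_eq_iff by (metis eq_iff_diff_eq_0)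
  moreover have "w \<in> vecs N"
    using x z by (auto simp: vecs_def w_def)
  moreover have "mat_vec P N \<phi> w = (\<lambda>_. 0)"
    using same by (simp add: w_def mat_vec_diff)
  ultimately have "spark P N \<phi> \<le> norm0 N w"
    by (rule spark_le_norm0[rotated -1])
  moreover have "norm0 N w \<le> 2 * norm0 N x"
    using norm0_diff_le[of N x z] sparser by (simp add: w_def)
  ultimately show False
    using sparse by linarith
qed

lemma unique_l0_solution_if_sparse:
  assumes "x \<in> vecs N" and "2 * norm0 N x < spark P N \<phi>"
  shows "unique_l0_solution P N \<phi> (mat_vec P N \<phi> x) x"
  unfolding unique_l0_solution_def
  using assms sparse_solution_unique[of x N _ P \<phi>] by (metis nat_le_linear)

lemma unique_l0_solution_unique:
  assumes "unique_l0_solution P N \<phi> y x" and "unique_l0_solution P N \<phi> y x'"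
  shows "x' = x"
  using assms unfolding unique_l0_solution_def by blast

lemma trajectory_one: "trajectory N A f h x0 1 = net_step N A f h x0"
  by (simp add: trajectory_def)

lemma net_step_vecs: "net_step N A f h x \<in> vecs N"
  by (simp add: vecs_def net_step_def)

lemma net_step_pinch_apply:
  assumes A1: "assumption1 N f" and h00: "\<forall>i\<in>{1..N}. \<forall>j\<in>{1..N}. h i j 0 0 = 0"
    and q: "q \<in> {1..N}" and i: "i \<in> {1..N}" "i \<noteq> q"
  shows "net_step N A f h (pinch q e) i = A i q * h i q 0 e"
proof -
  let ?term = "\<lambda>j. A i j * h i j (pinch q e i) (pinch q e j)"
  have "(\<Sum>j\<in>{1..N}. ?term j) = ?term q + (\<Sum>j\<in>{1..N}-{q}. ?term j)"
    using q by (simp add: sum.remove)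
  also have "(\<Sum>j\<in>{1..N}-{q}. ?term j) = 0"
    using h00 i by (intro sum.neutral) (auto simp: pinch_def)
  finally show ?thesis
    using A1 i by (simp add: net_step_def pinch_def assumption1_def)
qed

lemma supp_net_step_pinch:
  assumes adj: "adjacency N A" and A1: "assumption1 N f" and A2: "assumption2 N h \<delta>"
    and e: "0 < \<bar>e\<bar>" "\<bar>e\<bar> < \<delta>" and q: "q \<in> {1..N}"
  shows "supp N (net_step N A f h (pinch q e)) - {q} = L1 N A q"
proof -
  have "net_step N A f h (pinch q e) i \<noteq> 0 \<longleftrightarrow> A i q = 1"
    if i: "i \<in> {1..N}" "i \<noteq> q" for i
  proof -
    have "net_step N A f h (pinch q e) i = A i q * h i q 0 e"
      using A2 by (intro net_step_pinch_apply[OF A1 _ q i]) (simp add: assumption2_def)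
    moreover have "h i q 0 e \<noteq> 0"
      using A2 e q i by (simp add: assumption2_def)
    moreover have "A i q \<in> {0, 1}"
      using adj by (simp add: adjacency_def)
    ultimately show ?thesis
      by auto
  qed
  moreover have "A q q \<noteq> 1"
    using adj by (simp add: adjacency_def)
  ultimately show ?thesis
    by (auto simp: supp_def L1_def)
qed

lemma card_L1_le_max_out_degree:
  assumes "q \<in> {1..N}"
  shows "card (L1 N A q) \<le> max_out_degree N A"
  using assms unfolding max_out_degree_def L1_def out_degree_def[symmetric]
  by (intro Max_ge) auto

lemma norm0_le_max_out_degree:
  assumes "supp N x - {q} = L1 N A q" and "q \<in> {1..N}"
  shows "norm0 N x \<le> max_out_degree N A + 1"
proof -
  have "card (supp N x) \<le> card (insert q (L1 N A q))"
    using assms(1) by (intro card_mono) (auto simp: L1_def)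
  also have "\<dots> \<le> card (L1 N A q) + 1"
    by (simp add: card_insert_le_m1 card_insert_if L1_def)
  finally show ?thesis
    using card_L1_le_max_out_degree[OF assms(2), of A] by (simp add: norm0_def)
qed

theorem mainTheorem1:
  fixes N P :: nat and A :: "nat \<Rightarrow> nat \<Rightarrow> real"
    and f :: "nat \<Rightarrow> real \<Rightarrow> real" and h :: "nat \<Rightarrow> nat \<Rightarrow> real \<Rightarrow> real \<Rightarrow> real"
    and \<delta> :: real and \<phi> :: "nat \<Rightarrow> nat \<Rightarrow> nat \<Rightarrow> real" and eps :: "nat \<Rightarrow> real"
  assumes adj: "adjacency N A"
    and A1: "assumption1 N f"
    and A2: "assumption2 N h \<delta>"
    and P_lo: "2 * max_out_degree N A + 1 < P" and P_hi: "P < N"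
    and fs: "\<forall>q\<in>{1..N}. full_spark P N (\<phi> q)"
    and eps: "\<forall>q\<in>{1..N}. 0 < \<bar>eps q\<bar> \<and> \<bar>eps q\<bar> < \<delta>"
  shows "(\<forall>q\<in>{1..N}.
            unique_l0_solution P N (\<phi> q)
              (mat_vec P N (\<phi> q) (trajectory N A f h (pinch q (eps q)) 1))
              (trajectory N A f h (pinch q (eps q)) 1)
          \<and> supp N (trajectory N A f h (pinch q (eps q)) 1) - {q} = L1 N A q)
       \<and> (\<forall>i\<in>{1..N}. \<forall>j\<in>{1..N}.
            A i j = 1 \<longleftrightarrow> i \<noteq> j \<and>
              (\<exists>xs. unique_l0_solution P N (\<phi> j)
                       (mat_vec P N (\<phi> j) (trajectory N A f h (pinch j (eps j)) 1)) xs
                     \<and> i \<in> supp N xs))"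
proof -
  define X where "X q = trajectory N A f h (pinch q (eps q)) 1" for q
  have supp_X: "supp N (X q) - {q} = L1 N A q" if "q \<in> {1..N}" for q
    unfolding X_def trajectory_one using supp_net_step_pinch[OF adj A1 A2] eps that by blast
  have unique_X: "unique_l0_solution P N (\<phi> q) (mat_vec P N (\<phi> q) (X q)) (X q)"
    if q: "q \<in> {1..N}" for q
  proof (rule unique_l0_solution_if_sparse)
    show "X q \<in> vecs N"
      unfolding X_def trajectory_one by (rule net_step_vecs)
    show "2 * norm0 N (X q) < spark P N (\<phi> q)"
      using norm0_le_max_out_degree[OF supp_X[OF q] q] P_lo fs q by (simp add: full_spark_def)
  qed
  have adjacency_from_supp: "A i j = 1 \<longleftrightarrow> i \<noteq> j \<and> i \<in> supp N (X j)"
    if "i \<in> {1..N}" "j \<in> {1..N}" for i j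
    using supp_X[of j] that adj by (auto simp: L1_def adjacency_def)
  show ?thesis
    using adjacency_from_supp supp_X unique_X unique_l0_solution_unique unfolding X_def by metis
qed

end
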